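(* There is an absolute constant $c>0$ such that the following holds. Let $d\geq 2$ and $n\geq 2$ be integers and let $G$ be an acyclic directed graph on $n$ vertices in which every vertex has outdegree at most $d$, and which contains a directed Hamilton path. Then $G$ contains an induced directed path on at least $c\,\frac{\log n}{\log d}$ vertices.
   Context: A directed path $x_1\to x_2\to\dots\to x_k$ in a directed graph $G$ is induced if the only arcs of $G$ between vertices of $\{x_1,\dots,x_k\}$ (in either direction) are the arcs $x_i\to x_{i+1}$, $1\le i<k$. A directed Hamilton path is a directed path visiting every vertex. Logarithms are natural logarithms. *)

theory Defs
  imports "HOL-Analysis.Analysis"
begin

definition digraph :: "'a set \<Rightarrow> ('a \<Rightarrow> 'a \<Rightarrow> bool) \<Rightarrow> bool" where
  "digraph V E \<longleftrightarrow> finite V \<and> (\<forall>u v. E u v \<longrightarrow> u \<in> V \<and> v \<in> V)"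

definition acyclic_dg :: "('a \<Rightarrow> 'a \<Rightarrow> bool) \<Rightarrow> bool" where
  "acyclic_dg E \<longleftrightarrow> (\<forall>v. \<not> (tranclp E) v v)"

definition outdeg :: "'a set \<Rightarrow> ('a \<Rightarrow> 'a \<Rightarrow> bool) \<Rightarrow> 'a \<Rightarrow> nat" where
  "outdeg V E v = card {w \<in> V. E v w}"

definition dpath :: "'a set \<Rightarrow> ('a \<Rightarrow> 'a \<Rightarrow> bool) \<Rightarrow> 'a list \<Rightarrow> bool" where
  "dpath V E xs \<longleftrightarrow> set xs \<subseteq> V \<and> distinct xs \<and>
     (\<forall>i. Suc i < length xs \<longrightarrow> E (xs ! i) (xs ! Suc i))"

definition hamilton_dpath :: "'a set \<Rightarrow> ('a \<Rightarrow> 'a \<Rightarrow> bool) \<Rightarrow> 'a list \<Rightarrow> bool" where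
  "hamilton_dpath V E xs \<longleftrightarrow> dpath V E xs \<and> set xs = V"

definition induced_dpath :: "'a set \<Rightarrow> ('a \<Rightarrow> 'a \<Rightarrow> bool) \<Rightarrow> 'a list \<Rightarrow> bool" where
  "induced_dpath V E xs \<longleftrightarrow> dpath V E xs \<and>
     (\<forall>i<length xs. \<forall>j<length xs. E (xs ! i) (xs ! j) \<longrightarrow> j = Suc i)"

end

theory Submission
  imports Defs
begin

text \<open>Breadth-first search from the first vertex r of the Hamilton path reaches every
  vertex. Since outdegrees are at most d, fewer than d^k vertices lie within k vertices of r
  along directed walks, so some vertex v is reached only by walks on at least
  log n / log d vertices. A shortest walk from r to v is an induced directed path: a forward
  chord would shorten it, and a backward chord, or a repeated vertex, would close a
  directed cycle.\<close>

lemma distinct_if_sorted_wrt_irrefl: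
  assumes "sorted_wrt P xs" and "\<And>x. \<not> P x x"
  shows "distinct xs"
  using assms by (induction xs) auto

lemma sorted_wrt_tranclp_if_successively:
  assumes "successively E xs"
  shows "sorted_wrt E\<^sup>+\<^sup>+ xs"
proof -
  have "transp E\<^sup>+\<^sup>+"
    by (rule transpI) (rule tranclp_trans)
  then show ?thesis
    using assms by (metis successively_conv_sorted_wrt successively_mono tranclp.r_into_trancl)
qed

lemma successively_take_drop:
  assumes "successively E xs"
  shows "successively E (take k xs)" and "successively E (drop k xs)"
  using assms successively_append_iff[of E "take k xs" "drop k xs"] by simp_all

lemma successively_shortcut:
  assumes walk: "successively E xs" and "i < j" "j < length xs" and chord: "E (xs ! i) (xs ! j)"
  shows "successively E (take (Suc i) xs @ drop j xs)"
proof -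
  have "last (take (Suc i) xs) = xs ! i" and "hd (drop j xs) = xs ! j"
    using assms by (simp_all add: take_Suc_conv_app_nth hd_drop_conv_nth)
  then show ?thesis
    using successively_take_drop[OF walk] chord by (simp add: successively_append_iff)
qed

lemma set_walk_subset:
  assumes "digraph V E" "successively E xs" "xs \<noteq> []" "hd xs \<in> V"
  shows "set xs \<subseteq> V"
  using assms by (induction xs) (fastforce simp: successively_Cons digraph_def)+

fun reach_ball :: "'a set \<Rightarrow> ('a \<Rightarrow> 'a \<Rightarrow> bool) \<Rightarrow> 'a \<Rightarrow> nat \<Rightarrow> 'a set" where
  "reach_ball V E r 0 = {}"
| "reach_ball V E r (Suc k) = insert r (\<Union>u\<in>reach_ball V E r k. {w\<in>V. E u w})"

lemma reach_ball_mono: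
  assumes "k \<le> m"
  shows "reach_ball V E r k \<subseteq> reach_ball V E r m"
proof -
  have "reach_ball V E r k \<subseteq> reach_ball V E r (Suc k)" for k
    by (induction k) auto
  then show ?thesis
    using lift_Suc_mono_le[of "reach_ball V E r"] assms by blast
qed

lemma reach_ball_subset: "r \<in> V \<Longrightarrow> reach_ball V E r k \<subseteq> V"
  by (induction k) auto

lemma card_reach_ball_less:
  assumes "finite V" "r \<in> V" and deg: "\<forall>v\<in>V. outdeg V E v \<le> d" and "d \<ge> 2"
  shows "card (reach_ball V E r k) < d ^ k"
proof (induction k)
  case 0
  then show ?case by simp
next
  case (Suc k)
  let ?B = "reach_ball V E r k"
  have fin: "finite ?B"
    using reach_ball_subset assms finite_subset by metis
  have "card (\<Union>u\<in>?B. {w\<in>V. E u w}) \<le> (\<Sum>u\<in>?B. outdeg V E u)"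
    unfolding outdeg_def using fin by (rule card_UN_le)
  also have "\<dots> \<le> d * card ?B"
    using sum_bounded_above[of ?B "outdeg V E" d] reach_ball_subset[of r V E k] assms
    by (auto simp: mult.commute)
  finally have "card (reach_ball V E r (Suc k)) \<le> Suc (d * card ?B)"
    by (simp add: card_insert_le_m1 le_trans[OF card_insert_le_m1])
  also have "\<dots> < d * Suc (card ?B)"
    using \<open>d \<ge> 2\<close> by simp
  also have "\<dots> \<le> d ^ Suc k"
    using mult_le_mono2[OF Suc_leI[OF Suc.IH], of d] by simp
  finally show ?case .
qed

lemma last_walk_in_reach_ball:
  assumes "digraph V E" "successively E xs" "xs \<noteq> []"
  shows "last xs \<in> reach_ball V E (hd xs) (length xs)"
  using assms(2,3)
proof (induction xs rule: rev_induct)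
  case (snoc x xs)
  show ?case
  proof (cases "xs = []")
    case False
    then have "E (last xs) x" and "last xs \<in> reach_ball V E (hd xs) (length xs)"
      using snoc by (auto simp: successively_append_iff)
    then show ?thesis
      using \<open>digraph V E\<close> False by (auto simp: digraph_def)
  qed simp
qed simp

lemma walk_if_in_reach_ball:
  "v \<in> reach_ball V E r k \<Longrightarrow>
     \<exists>xs. successively E xs \<and> xs \<noteq> [] \<and> hd xs = r \<and> last xs = v \<and> length xs \<le> k"
proof (induction k arbitrary: v)
  case (Suc k)
  show ?case
  proof (cases "v = r")
    case True
    then show ?thesis by (intro exI[of _ "[r]"]) simp
  next
    case False
    then obtain u where "u \<in> reach_ball V E r k" and "E u v"
      using Suc.prems by auto
    then obtain xs where "successively E xs" "xs \<noteq> []" "hd xs = r" "last xs = u" "length xs \<le> k"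
      using Suc.IH by blast
    with \<open>E u v\<close> show ?thesis
      by (intro exI[of _ "xs @ [v]"]) (auto simp: successively_append_iff)
  qed
qed simp

lemma hamilton_dpath_reach_ball:
  assumes "digraph V E" "hamilton_dpath V E h"
  shows "V \<subseteq> reach_ball V E (hd h) (length h)"
proof
  fix v assume "v \<in> V"
  then obtain k where k: "k < length h" "h ! k = v"
    using assms(2) by (auto simp: hamilton_dpath_def in_set_conv_nth)
  let ?p = "take (Suc k) h"
  have "successively E h"
    using assms(2) by (simp add: hamilton_dpath_def dpath_def successively_conv_nth)
  then have "last ?p \<in> reach_ball V E (hd ?p) (length ?p)"
    using k(1) by (intro last_walk_in_reach_ball[OF assms(1)] successively_take_drop) auto
  moreover have "last ?p = v" "length ?p = Suc k"
    using k by (simp_all add: take_Suc_conv_app_nth)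
  moreover have "hd ?p = hd h"
    by (simp add: hd_take)
  ultimately have "v \<in> reach_ball V E (hd h) (Suc k)"
    by simp
  then show "v \<in> reach_ball V E (hd h) (length h)"
    using reach_ball_mono[of "Suc k" "length h" V E "hd h"] k(1) by (meson Suc_leI subsetD)
qed

lemma shortest_walk_induced_dpath:
  assumes dg: "digraph V E" and ac: "acyclic_dg E"
    and walk: "successively E xs" "xs \<noteq> []" "hd xs \<in> V"
    and shortest: "\<And>ys. successively E ys \<Longrightarrow> ys \<noteq> [] \<Longrightarrow> hd ys = hd xs \<Longrightarrow>
                         last ys = last xs \<Longrightarrow> length xs \<le> length ys"
  shows "induced_dpath V E xs"
proof -
  have irrefl: "\<not> E\<^sup>+\<^sup>+ x x" for x
    using ac by (simp add: acyclic_dg_def)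
  have sorted: "sorted_wrt E\<^sup>+\<^sup>+ xs"
    using walk(1) by (rule sorted_wrt_tranclp_if_successively)
  have no_chord: "j = Suc i" if ij: "i < length xs" "j < length xs" and e: "E (xs ! i) (xs ! j)"
    for i j
  proof -
    consider "j \<le> i" | "Suc i < j" | "j = Suc i" by linarith
    then show ?thesis
    proof cases
      case 1
      then have "xs ! j = xs ! i \<or> E\<^sup>+\<^sup>+ (xs ! j) (xs ! i)"
        using sorted_wrt_nth_less[OF sorted] ij by (cases "j = i") auto
      then have "E\<^sup>+\<^sup>+ (xs ! j) (xs ! j)"
        using e by auto
      then show ?thesis using irrefl by blast
    next
      case 2
      let ?ys = "take (Suc i) xs @ drop j xs"
      have "length xs \<le> length ?ys"
        using shortest[OF successively_shortcut[OF walk(1) _ ij(2) e]] 2 ij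
        by (simp add: hd_append last_append)
      then show ?thesis using 2 ij by simp
    qed
  qed
  have "dpath V E xs"
    unfolding dpath_def
    using set_walk_subset[OF dg walk] distinct_if_sorted_wrt_irrefl[OF sorted irrefl] walk(1)
    by (simp add: successively_conv_nth)
  then show ?thesis
    unfolding induced_dpath_def using no_chord by simp
qed

text \<open>The eccentricity K of r is realised by some vertex v; every walk from r to v then has
  at least K vertices, while the whole of V fits into a ball of radius K.\<close>

lemma long_induced_dpath_from_root:
  assumes dg: "digraph V E" and ac: "acyclic_dg E"
    and deg: "\<forall>v\<in>V. outdeg V E v \<le> d" and "d \<ge> 2"
    and r: "r \<in> V" and covered: "V \<subseteq> reach_ball V E r m"
  shows "\<exists>xs. induced_dpath V E xs \<and> card V < d ^ length xs"
proof -
  define K where "K = (LEAST K. V \<subseteq> reach_ball V E r K)"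
  have VK: "V \<subseteq> reach_ball V E r K"
    unfolding K_def using covered by (rule LeastI)
  then have "K \<noteq> 0"
    using r by (cases K) auto
  have "\<not> V \<subseteq> reach_ball V E r (K - 1)"
  proof
    assume "V \<subseteq> reach_ball V E r (K - 1)"
    then have "K \<le> K - 1"
      unfolding K_def by (rule Least_le)
    with \<open>K \<noteq> 0\<close> show False by simp
  qed
  then obtain v where v: "v \<in> V" "v \<notin> reach_ball V E r (K - 1)"
    by blast
  obtain xs where xs: "successively E xs" "xs \<noteq> []" "hd xs = r" "last xs = v" "length xs \<le> K"
    using walk_if_in_reach_ball[OF subsetD[OF VK v(1)]] by blast
  have far: "K \<le> length ys"
    if "successively E ys" "ys \<noteq> []" "hd ys = r" "last ys = v" for ys
  proof (rule ccontr)
    assume "\<not> K \<le> length ys"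
    then have "reach_ball V E r (length ys) \<subseteq> reach_ball V E r (K - 1)"
      by (intro reach_ball_mono) simp
    moreover have "v \<in> reach_ball V E r (length ys)"
      using last_walk_in_reach_ball[OF dg that(1,2)] that(3,4) by simp
    ultimately show False
      using v(2) by blast
  qed
  have "length xs = K"
    using far[OF xs(1-4)] xs(5) by simp
  have "induced_dpath V E xs"
  proof (rule shortest_walk_induced_dpath[OF dg ac xs(1,2)])
    show "hd xs \<in> V"
      using xs(3) r by simp
    show "length xs \<le> length ys"
      if "successively E ys" "ys \<noteq> []" "hd ys = hd xs" "last ys = last xs" for ys
      using far[OF that(1,2)] that xs \<open>length xs = K\<close> by simp
  qed
  moreover have "card V < d ^ length xs"
  proof -
    have "finite V"
      using dg by (simp add: digraph_def)
    then have "card V \<le> card (reach_ball V E r K)"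
      using VK reach_ball_subset[OF r] finite_subset by (metis card_mono)
    also have "\<dots> < d ^ length xs"
      using card_reach_ball_less[OF \<open>finite V\<close> r deg \<open>d \<ge> 2\<close>] \<open>length xs = K\<close> by simp
    finally show ?thesis .
  qed
  ultimately show ?thesis by blast
qed

lemma ln_div_ln_le_if_less_power:
  fixes x b :: real
  assumes "0 < x" "1 < b" "x < b ^ k"
  shows "ln x / ln b \<le> k"
proof -
  have "ln x < ln (b ^ k)"
    using assms by simp
  also have "\<dots> = k * ln b"
    using assms by (simp add: ln_realpow)
  finally show ?thesis
    using assms by (simp add: pos_divide_le_eq)
qed

theorem mainTheorem5:
  "\<exists>c::real. c > 0 \<and>
     (\<forall>(V::nat set) E (d::nat) (n::nat).
        digraph V E \<longrightarrow> card V = n \<longrightarrow> d \<ge> 2 \<longrightarrow> n \<ge> 2 \<longrightarrow>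
        acyclic_dg E \<longrightarrow> (\<forall>v\<in>V. outdeg V E v \<le> d) \<longrightarrow>
        (\<exists>xs. hamilton_dpath V E xs) \<longrightarrow>
        (\<exists>xs. induced_dpath V E xs \<and> real (length xs) \<ge> c * ln (real n) / ln (real d)))"
proof (intro exI[of _ 1] conjI allI impI)
  fix V :: "nat set" and E d n
  assume dg: "digraph V E" and n: "card V = n" "n \<ge> 2" and "d \<ge> 2"
    and ac: "acyclic_dg E" and deg: "\<forall>v\<in>V. outdeg V E v \<le> d"
    and "\<exists>xs. hamilton_dpath V E xs"
  then obtain h where h: "hamilton_dpath V E h" by blast
  have "hd h \<in> V"
    using h n by (cases h) (auto simp: hamilton_dpath_def)
  then obtain xs where "induced_dpath V E xs" and "n < d ^ length xs"
    using long_induced_dpath_from_root[OF dg ac deg \<open>d \<ge> 2\<close> _ hamilton_dpath_reach_ball[OF dg h]] n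
    by blast
  have "real n < real d ^ length xs"
    using \<open>n < d ^ length xs\<close> by (simp only: of_nat_power[symmetric] of_nat_less_iff)
  then have "ln (real n) / ln (real d) \<le> length xs"
    using \<open>n \<ge> 2\<close> \<open>d \<ge> 2\<close> by (intro ln_div_ln_le_if_less_power) auto
  with \<open>induced_dpath V E xs\<close>
  show "\<exists>xs. induced_dpath V E xs \<and> real (length xs) \<ge> 1 * ln (real n) / ln (real d)"
    by auto
qed simp

end
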